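(* Let $\Theta$ be a well-formed System $\mathsf{F_\wedge}$ context, $S, S'$ types over $\Theta$, $T$ a type over $\Theta, X<:\top$, and $t$ a term. If $\Theta \vdash t : \forall X.\,T[X\wedge S/X^-]$ and $\Theta \vdash S' <: S$, then $\Theta \vdash t\{S'\} : T[S'/X]$.
   Context: System $\mathsf{F_\wedge}$: raw types $T ::= \top \mid X \mid T \to T \mid \forall X.T \mid T \wedge T$ ($\forall X.T$ means $\forall(X<:\top).T$), up to $\alpha$-conversion. Contexts: finite sequences of $X<:T$ or $x:T$ with distinct variables, each type well-formed over the preceding part. Subtyping rules: (Var) $\Theta,X<:T,\Theta'\vdash X<:T$; (Top) $T<:\top$; (Refl); (Trans); ($\to$) from $S'<:S$, $T<:T'$ infer $S\to T<:S'\to T'$; ($\forall$) from $\Theta,X<:\top\vdash S<:T$ infer $\Theta\vdash\forall X.S<:\forall X.T$; (meet) $S\wedge S'<:S$, $S\wedge S'<:S'$, from $T<:S$, $T<:S'$ infer $T<:S\wedge S'$. Raw terms $t ::= \mathsf{top} \mid x \mid \lambda(x:T).t \mid \Lambda(X<:T).t \mid t\,t \mid t\{T\}$. Typing rules: $\Theta\vdash\mathsf{top}:\top$; $\Theta,x:T,\Theta'\vdash x:T$; (sub) from $t:T$ and $T<:T'$ infer $t:T'$; from $\Theta,x:S\vdash t:T$ infer $\Theta\vdash\lambda(x:S).t:S\to T$; from $t:S\to T$ and $s:S$ infer $t\,s:T$; from $\Theta,X<:S\vdash t:T$ infer $\Theta\vdash\Lambda(X<:S).t:\forall(X<:S).T$;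 from $\Theta\vdash t:\forall(X<:S).T$ and $\Theta\vdash S'<:S$ infer $\Theta\vdash t\{S'\}:T[S'/X]$. Mixed substitution $T[(S_-,S_+)/X]$: $X\mapsto S_+$; other variables and $\top$ unchanged; $(T\to T')[(S_-,S_+)/X]=T[(S_+,S_-)/X]\to T'[(S_-,S_+)/X]$; commutes with $\forall Y$ and $\wedge$. $T[U/X^-]$ abbreviates $T[(U,X)/X]$. *)

theory Defs
  imports Main
begin

text \<open>Type variables and term variables
  are indexed separately: a type variable index counts only the type-variable
  bindings of the context (most recent first), a term variable index counts only
  the term-variable bindings.\<close>

datatype type =
    Top
  | TVar nat
  | Arr type type
  | All type            \<comment> \<open>All X. T, i.e. All (X <: Top). T; X is index 0 in the body\<close>
  | Meet type type

datatype trm =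
    top
  | Var nat
  | Abs type trm
  | TAbs type trm
  | App trm trm
  | TApp trm type

datatype binding = VarB type | TVarB type

type_synonym env = "binding list"

fun shiftT :: "nat \<Rightarrow> nat \<Rightarrow> type \<Rightarrow> type" where
  "shiftT n k Top = Top"
| "shiftT n k (TVar i) = (if i < k then TVar i else TVar (i + n))"
| "shiftT n k (Arr T U) = Arr (shiftT n k T) (shiftT n k U)"
| "shiftT n k (All T) = All (shiftT n (Suc k) T)"
| "shiftT n k (Meet T U) = Meet (shiftT n k T) (shiftT n k U)"

fun substT :: "type \<Rightarrow> nat \<Rightarrow> type \<Rightarrow> type" where
  "substT Top k S = Top"
| "substT (TVar i) k S =
     (if i < k then TVar i else if i = k then shiftT k 0 S else TVar (i - 1))"
| "substT (Arr T U) k S = Arr (substT T k S) (substT U k S)"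
| "substT (All T) k S = All (substT T (Suc k) S)"
| "substT (Meet T U) k S = Meet (substT T k S) (substT U k S)"

text \<open>Mixed substitution \<open>T[(Sm,Sp)/X_k]\<close>: positive occurrences of \<open>X_k\<close> become \<open>Sp\<close>,
  negative ones \<open>Sm\<close>; all other variables are unchanged (no decrement), so
  \<open>Sm\<close>, \<open>Sp\<close> live in the same context as \<open>T\<close>.\<close>
fun msubstT :: "type \<Rightarrow> nat \<Rightarrow> type \<Rightarrow> type \<Rightarrow> type" where
  "msubstT Top k Sm Sp = Top"
| "msubstT (TVar i) k Sm Sp = (if i = k then shiftT k 0 Sp else TVar i)"
| "msubstT (Arr T U) k Sm Sp = Arr (msubstT T k Sp Sm) (msubstT U k Sm Sp)"
| "msubstT (All T) k Sm Sp = All (msubstT T (Suc k) Sm Sp)"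
| "msubstT (Meet T U) k Sm Sp = Meet (msubstT T k Sm Sp) (msubstT U k Sm Sp)"

text \<open>\<open>T[U/X^-] = T[(U,X)/X]\<close> for the variable \<open>X\<close> = index 0.\<close>
definition negsubst :: "type \<Rightarrow> type \<Rightarrow> type" where
  "negsubst T U = msubstT T 0 U (TVar 0)"

fun ntv :: "env \<Rightarrow> nat" where
  "ntv [] = 0"
| "ntv (VarB T # \<Gamma>) = ntv \<Gamma>"
| "ntv (TVarB T # \<Gamma>) = Suc (ntv \<Gamma>)"

text \<open>Bound of the \<open>i\<close>-th type variable, expressed in the whole context.\<close>
fun tlookup :: "env \<Rightarrow> nat \<Rightarrow> type option" where
  "tlookup [] i = None"
| "tlookup (VarB T # \<Gamma>) i = tlookup \<Gamma> i"
| "tlookup (TVarB T # \<Gamma>) i =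
     (case i of 0 \<Rightarrow> Some (shiftT 1 0 T)
              | Suc j \<Rightarrow> map_option (shiftT 1 0) (tlookup \<Gamma> j))"

text \<open>Type of the \<open>i\<close>-th term variable, expressed in the whole context.\<close>
fun vlookup :: "env \<Rightarrow> nat \<Rightarrow> type option" where
  "vlookup [] i = None"
| "vlookup (VarB T # \<Gamma>) i = (case i of 0 \<Rightarrow> Some T | Suc j \<Rightarrow> vlookup \<Gamma> j)"
| "vlookup (TVarB T # \<Gamma>) i = map_option (shiftT 1 0) (vlookup \<Gamma> i)"

fun closedT :: "nat \<Rightarrow> type \<Rightarrow> bool" where
  "closedT n Top = True"
| "closedT n (TVar i) = (i < n)"
| "closedT n (Arr T U) = (closedT n T \<and> closedT n U)"
| "closedT n (All T) = closedT (Suc n) T"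
| "closedT n (Meet T U) = (closedT n T \<and> closedT n U)"

definition wfT :: "env \<Rightarrow> type \<Rightarrow> bool" where
  "wfT \<Gamma> T = closedT (ntv \<Gamma>) T"

fun wfE :: "env \<Rightarrow> bool" where
  "wfE [] = True"
| "wfE (VarB T # \<Gamma>) = (wfT \<Gamma> T \<and> wfE \<Gamma>)"
| "wfE (TVarB T # \<Gamma>) = (wfT \<Gamma> T \<and> wfE \<Gamma>)"

inductive subtype :: "env \<Rightarrow> type \<Rightarrow> type \<Rightarrow> bool" ("_ \<turnstile> _ <: _" [50, 50, 50] 50) where
  S_Var: "tlookup \<Gamma> i = Some U \<Longrightarrow> \<Gamma> \<turnstile> TVar i <: U"
| S_Top: "\<Gamma> \<turnstile> T <: Top"
| S_Refl: "\<Gamma> \<turnstile> T <: T"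
| S_Trans: "\<Gamma> \<turnstile> S <: U \<Longrightarrow> \<Gamma> \<turnstile> U <: T \<Longrightarrow> \<Gamma> \<turnstile> S <: T"
| S_Arr: "\<Gamma> \<turnstile> S' <: S \<Longrightarrow> \<Gamma> \<turnstile> T <: T' \<Longrightarrow> \<Gamma> \<turnstile> Arr S T <: Arr S' T'"
| S_All: "TVarB Top # \<Gamma> \<turnstile> S <: T \<Longrightarrow> \<Gamma> \<turnstile> All S <: All T"
| S_Meet1: "\<Gamma> \<turnstile> Meet S S' <: S"
| S_Meet2: "\<Gamma> \<turnstile> Meet S S' <: S'"
| S_Meet3: "\<Gamma> \<turnstile> T <: S \<Longrightarrow> \<Gamma> \<turnstile> T <: S' \<Longrightarrow> \<Gamma> \<turnstile> T <: Meet S S'"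

inductive typing :: "env \<Rightarrow> trm \<Rightarrow> type \<Rightarrow> bool" ("_ \<turnstile> _ : _" [50, 50, 50] 50) where
  T_Top: "\<Gamma> \<turnstile> top : Top"
| T_Var: "vlookup \<Gamma> i = Some T \<Longrightarrow> \<Gamma> \<turnstile> Var i : T"
| T_Sub: "\<Gamma> \<turnstile> t : T \<Longrightarrow> \<Gamma> \<turnstile> T <: T' \<Longrightarrow> \<Gamma> \<turnstile> t : T'"
| T_Abs: "VarB S # \<Gamma> \<turnstile> t : T \<Longrightarrow> \<Gamma> \<turnstile> Abs S t : Arr S T"
| T_App: "\<Gamma> \<turnstile> t : Arr S T \<Longrightarrow> \<Gamma> \<turnstile> s : S \<Longrightarrow> \<Gamma> \<turnstile> App t s : T"
| T_TAbs: "TVarB Top # \<Gamma> \<turnstile> t : T \<Longrightarrow> \<Gamma> \<turnstile> TAbs Top t : All T"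
| T_TApp: "\<Gamma> \<turnstile> t : All T \<Longrightarrow> \<Gamma> \<turnstile> S' <: Top \<Longrightarrow> \<Gamma> \<turnstile> TApp t S' : substT T 0 S'"

end

theory Submission
  imports Defs
begin

text \<open>Instantiating \<open>X\<close> by \<open>S'\<close> in \<open>T[X \<and> S/X\<^sup>-]\<close> gives \<open>T\<close> with its negative
  occurrences of \<open>X\<close> replaced by \<open>S' \<and> S\<close> and its positive ones by \<open>S'\<close>. Mixed
  substitution is antitone in the negative and monotone in the positive argument, and
  \<open>S' <: S' \<and> S\<close> because \<open>S' <: S\<close>; hence that type is a subtype of \<open>T[S'/X]\<close>, and
  subsumption finishes the proof.\<close>

fun substT_mixed :: "type \<Rightarrow> nat \<Rightarrow> type \<Rightarrow> type \<Rightarrow> type" where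
  "substT_mixed Top k Sm Sp = Top"
| "substT_mixed (TVar i) k Sm Sp =
     (if i < k then TVar i else if i = k then shiftT k 0 Sp else TVar (i - 1))"
| "substT_mixed (Arr T U) k Sm Sp = Arr (substT_mixed T k Sp Sm) (substT_mixed U k Sm Sp)"
| "substT_mixed (All T) k Sm Sp = All (substT_mixed T (Suc k) Sm Sp)"
| "substT_mixed (Meet T U) k Sm Sp = Meet (substT_mixed T k Sm Sp) (substT_mixed U k Sm Sp)"

lemma shiftT_0 [simp]: "shiftT 0 k T = T"
  by (induction T arbitrary: k) auto

lemma shiftT_shiftT:
  "i \<le> j \<Longrightarrow> j \<le> i + m \<Longrightarrow> shiftT n j (shiftT m i T) = shiftT (n + m) i T"
  by (induction T arbitrary: i j) auto

lemma shiftT_shiftT_commute: "shiftT 1 (k + j) (shiftT k j T) = shiftT k j (shiftT 1 j T)"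
proof (induction T arbitrary: j)
  case (All T)
  then show ?case using All.IH[of "Suc j"] by simp
qed auto

lemma substT_shiftT_cancel: "substT (shiftT 1 k T) k U = T"
  by (induction T arbitrary: k) auto

lemma substT_shiftT: "substT (shiftT k j T) (k + j) U = shiftT k j (substT T j U)"
proof (induction T arbitrary: j)
  case (TVar i)
  then show ?case by (auto simp: shiftT_shiftT)
next
  case (All T)
  then show ?case using All.IH[of "Suc j"] by simp
qed auto

lemma substT_mixed_same: "substT_mixed T k S S = substT T k S"
  by (induction T arbitrary: k) auto

lemma substT_msubstT:
  "substT (msubstT T k Sm Sp) k U = substT_mixed T k (substT Sm 0 U) (substT Sp 0 U)"
proof (induction T arbitrary: k Sm Sp)
  case (TVar i)
  then show ?case using substT_shiftT[of k 0 Sp U] by auto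
qed auto

lemma tlookup_replicate_Top:
  "tlookup (replicate k (TVarB Top) @ \<Gamma>) i =
     (if i < k then Some Top else map_option (shiftT k 0) (tlookup \<Gamma> (i - k)))"
proof (induction k arbitrary: i)
  case 0
  then show ?case by (simp add: option.map_ident_strong)
next
  case (Suc k)
  then show ?case by (cases i) (auto simp: option.map_comp comp_def shiftT_shiftT)
qed

lemma subtype_insert_TVarB_Top:
  assumes "replicate k (TVarB Top) @ \<Gamma> \<turnstile> A <: B"
  shows "replicate k (TVarB Top) @ TVarB Top # \<Gamma> \<turnstile> shiftT 1 k A <: shiftT 1 k B"
proof -
  have "replicate k (TVarB Top) @ TVarB Top # \<Gamma> \<turnstile> shiftT 1 k A <: shiftT 1 k B"
    if "\<Delta> \<turnstile> A <: B" and "\<Delta> = replicate k (TVarB Top) @ \<Gamma>" for \<Delta> k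
    using that
  proof (induction arbitrary: k rule: subtype.induct)
    case (S_Var \<Delta> i U)
    show ?case
    proof (cases "i < k")
      case True
      with S_Var show ?thesis by (auto simp: tlookup_replicate_Top intro!: subtype.S_Var)
    next
      case False
      with S_Var obtain U0 where "tlookup \<Gamma> (i - k) = Some U0" and "U = shiftT k 0 U0"
        by (auto simp: tlookup_replicate_Top)
      with False have "tlookup (replicate k (TVarB Top) @ TVarB Top # \<Gamma>) (i + 1) =
          Some (shiftT 1 k U)"
        using shiftT_shiftT_commute[of k 0 U0] by (auto simp: tlookup_replicate_Top Suc_diff_le)
      with False show ?thesis by (auto intro: subtype.S_Var)
    qed
  next
    case (S_All \<Delta> S T)
    then show ?case using S_All.IH[of "Suc k"] by (auto intro: subtype.S_All)
  qed (auto intro: subtype.intros)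
  with assms show ?thesis by blast
qed

lemma subtype_shiftT:
  "\<Gamma> \<turnstile> A <: B \<Longrightarrow> replicate k (TVarB Top) @ \<Gamma> \<turnstile> shiftT k 0 A <: shiftT k 0 B"
proof (induction k)
  case (Suc k)
  have "shiftT (Suc k) 0 T = shiftT 1 0 (shiftT k 0 T)" for T
    by (simp add: shiftT_shiftT)
  with Suc show ?case
    using subtype_insert_TVarB_Top[of 0 "replicate k (TVarB Top) @ \<Gamma>"] by simp
qed simp

lemma subtype_substT_mixed:
  assumes "\<Gamma> \<turnstile> Sm' <: Sm" and "\<Gamma> \<turnstile> Sp <: Sp'"
  shows "replicate k (TVarB Top) @ \<Gamma> \<turnstile> substT_mixed T k Sm Sp <: substT_mixed T k Sm' Sp'"
  using assms
proof (induction T arbitrary: k Sm Sm' Sp Sp')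
  case (TVar i)
  then show ?case by (auto intro: subtype.intros subtype_shiftT)
next
  case (Arr T U)
  then show ?case by (auto intro: subtype.S_Arr)
next
  case (All T)
  from All.IH[OF All.prems, of "Suc k"] show ?case by (auto intro: subtype.S_All)
next
  case (Meet T U)
  let ?\<Delta> = "replicate k (TVarB Top) @ \<Gamma>"
  have "?\<Delta> \<turnstile> substT_mixed T k Sm Sp <: substT_mixed T k Sm' Sp'"
    and "?\<Delta> \<turnstile> substT_mixed U k Sm Sp <: substT_mixed U k Sm' Sp'"
    using Meet by auto
  then show ?case by (auto intro: subtype.S_Meet3 subtype.S_Trans[OF subtype.S_Meet1]
      subtype.S_Trans[OF subtype.S_Meet2])
qed (auto intro: subtype.intros)

theorem proposition5p1:
  assumes "wfE \<Theta>"
    and "wfT \<Theta> S" and "wfT \<Theta> S'"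
    and "wfT (TVarB Top # \<Theta>) T"
    and "\<Theta> \<turnstile> t : All (negsubst T (Meet (TVar 0) (shiftT 1 0 S)))"
    and "\<Theta> \<turnstile> S' <: S"
  shows "\<Theta> \<turnstile> TApp t S' : substT T 0 S'"
proof -
  have "\<Theta> \<turnstile> TApp t S' : substT (negsubst T (Meet (TVar 0) (shiftT 1 0 S))) 0 S'"
    using assms(5) S_Top by (rule T_TApp)
  also have "substT (negsubst T (Meet (TVar 0) (shiftT 1 0 S))) 0 S' =
      substT_mixed T 0 (Meet S' S) S'"
    using substT_shiftT_cancel[of 0 S S'] by (simp add: negsubst_def substT_msubstT)
  finally have typed: "\<Theta> \<turnstile> TApp t S' : substT_mixed T 0 (Meet S' S) S'" .
  have "\<Theta> \<turnstile> S' <: Meet S' S"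
    using assms(6) by (auto intro: subtype.intros)
  then have "\<Theta> \<turnstile> substT_mixed T 0 (Meet S' S) S' <: substT_mixed T 0 S' S'"
    using subtype_substT_mixed[of \<Theta> S' "Meet S' S" S' S' 0 T] S_Refl by simp
  with typed show ?thesis
    unfolding substT_mixed_same by (rule T_Sub)
qed

end
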